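(* Let $\alpha\in\mathbb N$, $\alpha\ge2$, and $\gamma>0$. Then $\mathcal H(K^{\cos}_{\alpha,\gamma})\subseteq\mathcal H(K^{\rm sob}_{\alpha,\gamma})$ and for every $f\in\mathcal H(K^{\cos}_{\alpha,\gamma})$, $$\|f\|_{K^{\rm sob}_{\alpha,\gamma}}\le\left(\frac{\pi^{2(\alpha+1)}-1}{\pi^2-1}\right)^{1/2}\|f\|_{K^{\cos}_{\alpha,\gamma}}.$$ Moreover the function $x\mapsto x$ lies in $\mathcal H(K^{\rm sob}_{\alpha,\gamma})$ but not in $\mathcal H(K^{\cos}_{\alpha,\gamma})$ (indeed it is not in $\mathcal H(K^{\cos}_{\alpha,\gamma})$ for any real $\alpha\ge3/2$).
   Context: $r_{\alpha,\gamma}(0)=1$, $r_{\alpha,\gamma}(k)=\gamma|k|^{-2\alpha}$ for $k\neq0$. Cosine coefficients: $\tilde f_{\cos}(0)=\int_0^1f$, $\tilde f_{\cos}(k)=\int_0^1f(x)\sqrt2\cos(\pi kx)\,dx$ for $k\ge1$. $\mathcal H(K^{\cos}_{\alpha,\gamma})$ is the space of functions with $\|f\|^2_{K^{\cos}_{\alpha,\gamma}}=\sum_{k\ge0}|\tilde f_{\cos}(k)|^2r_{\alpha,\gamma}(k)^{-1}<\infty$ (reproducing kernel $1+\sum_{k\ge1}r_{\alpha,\gamma}(k)2\cos(\pi kx)\cos(\pi ky)$). $\mathcal H(K^{\rm sob}_{\alpha,\gamma})$ is the Sobolev space with inner product $\langle f,g\rangle=\int_0^1f\int_0^1g+\frac1\gamma\sum_{\tau=1}^{\alpha-1}\int_0^1f^{(\tau)}\int_0^1g^{(\tau)}+\frac1\gamma\int_0^1f^{(\alpha)}g^{(\alpha)}$.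 *)

theory Defs
  imports "HOL-Analysis.Analysis"
begin

definition r_weight :: "real \<Rightarrow> real \<Rightarrow> nat \<Rightarrow> real" where
  "r_weight \<alpha> \<gamma> k = (if k = 0 then 1 else \<gamma> * (real k) powr (- 2 * \<alpha>))"

definition cos_basis :: "nat \<Rightarrow> real \<Rightarrow> real" where
  "cos_basis k x = (if k = 0 then 1 else sqrt 2 * cos (pi * real k * x))"

definition cos_coeff :: "(real \<Rightarrow> real) \<Rightarrow> nat \<Rightarrow> real" where
  "cos_coeff f k = (LINT x:{0..1}|lborel. f x * cos_basis k x)"

definition H_cos :: "real \<Rightarrow> real \<Rightarrow> (real \<Rightarrow> real) set" where
  "H_cos \<alpha> \<gamma> = {f. \<exists>c::nat \<Rightarrow> real.
      summable (\<lambda>k. (c k)\<^sup>2 / r_weight \<alpha> \<gamma> k) \<and>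
      (\<forall>x\<in>{0..1}. (\<lambda>k. c k * cos_basis k x) sums f x)}"

definition cos_norm :: "real \<Rightarrow> real \<Rightarrow> (real \<Rightarrow> real) \<Rightarrow> real" where
  "cos_norm \<alpha> \<gamma> f = sqrt (\<Sum>k. (cos_coeff f k)\<^sup>2 / r_weight \<alpha> \<gamma> k)"

text \<open>D is a family of derivatives of f of orders 0..alpha on [0,1]:
  D 0 = f, D tau is differentiable with derivative D (tau+1) for tau < alpha-1,
  D (alpha-1) is absolutely continuous with a.e. derivative D alpha, and
  D alpha is square integrable on [0,1].\<close>
definition sob_derivs :: "nat \<Rightarrow> (real \<Rightarrow> real) \<Rightarrow> (nat \<Rightarrow> real \<Rightarrow> real) \<Rightarrow> bool" where
  "sob_derivs \<alpha> f D \<longleftrightarrow>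
     (\<forall>x\<in>{0..1}. D 0 x = f x) \<and>
     (\<forall>\<tau><\<alpha> - 1. \<forall>x\<in>{0..1}.
         (D \<tau> has_real_derivative D (Suc \<tau>) x) (at x within {0..1})) \<and>
     D \<alpha> \<in> borel_measurable lborel \<and>
     set_integrable lborel {0..1} (\<lambda>x. (D \<alpha> x)\<^sup>2) \<and>
     (\<forall>x\<in>{0..1}. D (\<alpha> - 1) x = D (\<alpha> - 1) 0 + (LINT t:{0..x}|lborel. D \<alpha> t))"

definition H_sob :: "nat \<Rightarrow> (real \<Rightarrow> real) set" where
  "H_sob \<alpha> = {f. \<exists>D. sob_derivs \<alpha> f D}"

text \<open>Sobolev norm (independent of the choice of derivative family).\<close>
definition sob_norm :: "nat \<Rightarrow> real \<Rightarrow> (real \<Rightarrow> real) \<Rightarrow> real" where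
  "sob_norm \<alpha> \<gamma> f = (let D = (SOME D. sob_derivs \<alpha> f D) in
     sqrt ((LINT x:{0..1}|lborel. f x)\<^sup>2
       + (1 / \<gamma>) * (\<Sum>\<tau>=1..\<alpha>-1. (LINT x:{0..1}|lborel. D \<tau> x)\<^sup>2)
       + (1 / \<gamma>) * (LINT x:{0..1}|lborel. (D \<alpha> x)\<^sup>2)))"

end

theory Submission
  imports Defs
begin

text \<open>
  Write \<open>f = (\<Sum>k. c k * cos_basis k)\<close> with \<open>\<Sum>k. c k^2 * k^(2\<alpha>)\<close> finite. For \<open>j < \<alpha>\<close> the
  termwise differentiated series converge uniformly (Weierstrass test, as
  \<open>\<Sum>k. \<bar>c k\<bar> * k^j\<close> is finite) and are the classical derivatives of \<open>f\<close>. The derivatives of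
  the cosine basis stay orthogonal on \<open>[0,1]\<close>, the \<open>j\<close>-th derivative of \<open>cos_basis k\<close> having
  squared norm \<open>(\<pi> k)^(2j)\<close>. Hence the partial sums of the \<open>\<alpha>\<close>-th derivative series are Cauchy
  in \<open>L\<^sup>2\<close>; an a.e. limit of a subsequence is a weak \<open>\<alpha>\<close>-th derivative, and Fatou's lemma bounds
  the squared \<open>L\<^sup>2\<close> norm of the \<open>\<tau>\<close>-th derivative by \<open>\<pi>^(2\<tau>) * (\<Sum>k. c k^2 * k^(2\<alpha>))\<close>, which
  also bounds the square of its integral. Sobolev derivatives are unique (the top one a.e.), so
  summing these bounds gives the norm estimate with constant \<open>\<Sum>i\<le>\<alpha>. \<pi>^(2i)\<close>.
  For \<open>f x = x\<close> the odd cosine coefficients are \<open>-2 sqrt 2 / (\<pi> m)^2\<close>, so for \<open>a \<ge> 3/2\<close> the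
  weighted coefficient series dominates a multiple of the divergent \<open>\<Sum>m odd. 1/m\<close>.
\<close>

section \<open>Derivatives of the cosine basis\<close>

text \<open>Each derivative shifts the phase by \<open>\<pi>/2\<close>.\<close>

definition cos_basis_deriv :: "nat \<Rightarrow> nat \<Rightarrow> real \<Rightarrow> real" where
  "cos_basis_deriv j k x = (if k = 0 then (if j = 0 then 1 else 0)
      else sqrt 2 * (pi * real k) ^ j * cos (pi * real k * x + real j * pi / 2))"

definition cos_basis_deriv_weight :: "nat \<Rightarrow> nat \<Rightarrow> real" where
  "cos_basis_deriv_weight j k = (if k = 0 then (if j = 0 then 1 else 0) else (pi * real k) ^ (2 * j))"

lemma cos_basis_deriv_0: "cos_basis_deriv 0 k x = cos_basis k x"
  by (simp add: cos_basis_deriv_def cos_basis_def)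

lemma cos_basis_deriv_pos:
  "k \<noteq> 0 \<Longrightarrow> cos_basis_deriv j k = (\<lambda>x. sqrt 2 * (pi * real k) ^ j * cos (pi * real k * x + real j * pi / 2))"
  by (simp add: cos_basis_deriv_def fun_eq_iff)

lemma cos_basis_deriv_zero: "cos_basis_deriv j 0 = (\<lambda>_. if j = 0 then 1 else 0)"
  by (simp add: cos_basis_deriv_def fun_eq_iff)

lemma has_real_derivative_cos_basis_deriv:
  "(cos_basis_deriv j k has_real_derivative cos_basis_deriv (Suc j) k x) (at x within S)"
proof (cases "k = 0")
  case True
  then show ?thesis by (simp add: cos_basis_deriv_zero)
next
  case False
  have shift: "- sin (pi * real k * x + real j * pi / 2) = cos (pi * real k * x + real (Suc j) * pi / 2)"
    by (simp add: minus_sin_cos_eq distrib_right add_divide_distrib add_ac)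
  have "((\<lambda>x. sqrt 2 * (pi * real k) ^ j * cos (pi * real k * x + real j * pi / 2)) has_real_derivative
        sqrt 2 * (pi * real k) ^ j * (- sin (pi * real k * x + real j * pi / 2) * (pi * real k)))
        (at x within S)"
    by (auto intro!: derivative_eq_intros)
  moreover have "cos_basis_deriv (Suc j) k x
      = sqrt 2 * (pi * real k) ^ j * (- sin (pi * real k * x + real j * pi / 2) * (pi * real k))"
    using False by (simp only: cos_basis_deriv_def shift if_False) (simp add: mult_ac)
  ultimately show ?thesis
    using False by (simp add: cos_basis_deriv_pos)
qed

lemma continuous_on_cos_basis_deriv: "continuous_on S (cos_basis_deriv j k)"
  by (cases "k = 0") (auto simp: cos_basis_deriv_zero cos_basis_deriv_pos intro!: continuous_intros)

lemma abs_cos_basis_deriv_le: "\<bar>cos_basis_deriv j k x\<bar> \<le> 2 * (pi * real k) ^ j + 1"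
proof (cases "k = 0")
  case False
  have "\<bar>cos_basis_deriv j k x\<bar> = sqrt 2 * (pi * real k) ^ j * \<bar>cos (pi * real k * x + real j * pi / 2)\<bar>"
    using False by (simp add: cos_basis_deriv_pos abs_mult)
  also have "\<dots> \<le> 2 * (pi * real k) ^ j * 1"
    using sqrt2_less_2 by (intro mult_mono) auto
  finally show ?thesis by simp
qed (simp add: cos_basis_deriv_def)

lemma set_integral_FTC_Icc:
  fixes f F :: "real \<Rightarrow> real"
  assumes "a \<le> b" "\<And>x. (F has_real_derivative f x) (at x)" "continuous_on {a..b} f"
  shows "(LINT x:{a..b}|lborel. f x) = F b - F a"
  unfolding set_lebesgue_integral_def
  by (rule integral_FTC_Icc)
     (use assms in \<open>auto simp: has_real_derivative_iff_has_vector_derivative[symmetric]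
        intro: has_field_derivative_at_within\<close>)

lemma set_integral_cos_int_multiple:
  fixes p q :: int
  assumes "p \<noteq> 0"
  shows "(LINT x:{0..1}|lborel. cos (pi * of_int p * x + pi * of_int q)) = 0"
proof -
  have "(LINT x:{0..1}|lborel. cos (pi * of_int p * x + pi * of_int q))
      = sin (pi * of_int (p + q)) / (pi * of_int p) - sin (pi * of_int q) / (pi * of_int p)"
    by (subst set_integral_FTC_Icc[where F = "\<lambda>x. sin (pi * of_int p * x + pi * of_int q) / (pi * of_int p)"])
       (use assms in \<open>auto intro!: derivative_eq_intros continuous_intros simp: distrib_left\<close>)
  then show ?thesis by (simp only: sin_npi_int)
qed

lemma set_integral_Icc_01_const: "(LINT (x::real):{0..1}|lborel. c) = (c::real)"
  by (subst set_integral_const) (auto simp: measure_lborel_Icc emeasure_lborel_Icc)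

lemma set_integral_cos_basis_deriv_mult:
  "(LINT x:{0..1}|lborel. cos_basis_deriv j k x * cos_basis_deriv j m x) =
     (if k = m then cos_basis_deriv_weight j k else 0)"
proof (cases "k = 0 \<or> m = 0")
  case True
  have cos_int: "(LINT x:{0..1}|lborel. cos (pi * of_int (int n) * x + pi * of_int 0)) = 0" if "n \<noteq> 0" for n
    by (rule set_integral_cos_int_multiple) (use that in auto)
  show ?thesis
    using True cos_int[of k] cos_int[of m]
    by (auto simp: cos_basis_deriv_def cos_basis_deriv_weight_def set_integral_Icc_01_const)
next
  case False
  define C where "C = (pi * real k) ^ j * (pi * real m) ^ j"
  have product: "cos_basis_deriv j k x * cos_basis_deriv j m x
      = C * (cos (pi * of_int (int k - int m) * x + pi * of_int 0)
             + cos (pi * of_int (int k + int m) * x + pi * of_int (int j)))" for x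
  proof -
    have "cos_basis_deriv j k x * cos_basis_deriv j m x
        = 2 * C * (cos (pi * real k * x + real j * pi / 2) * cos (pi * real m * x + real j * pi / 2))"
      using False by (simp add: cos_basis_deriv_pos C_def mult_ac)
    also have "\<dots> = C * (cos (pi * of_int (int k - int m) * x + pi * of_int 0)
             + cos (pi * of_int (int k + int m) * x + pi * of_int (int j)))"
      by (simp add: cos_times_cos algebra_simps)
    finally show ?thesis .
  qed
  have sum_freq: "(LINT x:{0..1}|lborel. cos (pi * of_int (int k + int m) * x + pi * of_int (int j))) = 0"
    by (rule set_integral_cos_int_multiple) (use False in auto)
  have "(LINT x:{0..1}|lborel. cos_basis_deriv j k x * cos_basis_deriv j m x)
      = C * (LINT x:{0..1}|lborel. cos (pi * of_int (int k - int m) * x + pi * of_int 0))"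
    unfolding product
    by (subst set_integral_mult_right, subst set_integral_add)
       (auto intro!: borel_integrable_atLeastAtMost' continuous_intros simp only: sum_freq add_0_right)
  moreover have "(LINT x:{0..1}|lborel. cos (pi * of_int (int k - int m) * x + pi * of_int 0)) = 0"
    if "k \<noteq> m"
    by (rule set_integral_cos_int_multiple) (use that in auto)
  ultimately show ?thesis
    using False
    by (auto simp: C_def cos_basis_deriv_weight_def set_integral_Icc_01_const power_mult_distrib
        power_mult power2_eq_square)
qed

section \<open>Lebesgue integration lemmas\<close>

lemma indicator_mult_square: "(indicator A x * u)\<^sup>2 = indicator A x * (u :: real)\<^sup>2"
  by (simp split: split_indicator)

lemma set_integral_sum:
  fixes f :: "'i \<Rightarrow> 'a \<Rightarrow> real"
  assumes "\<And>k. k \<in> K \<Longrightarrow> set_integrable M A (f k)"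
  shows "(LINT x:A|M. (\<Sum>k\<in>K. f k x)) = (\<Sum>k\<in>K. LINT x:A|M. f k x)"
  using assms unfolding set_lebesgue_integral_def set_integrable_def
  by (simp add: sum_distrib_left integral_sum)

lemma set_integral_square_sum_cos_basis_deriv:
  assumes "finite K"
  shows "(LINT x:{0..1}|lborel. (\<Sum>k\<in>K. d k * cos_basis_deriv j k x)\<^sup>2)
       = (\<Sum>k\<in>K. (d k)\<^sup>2 * cos_basis_deriv_weight j k)"
proof -
  have "(LINT x:{0..1}|lborel. (\<Sum>k\<in>K. d k * cos_basis_deriv j k x)\<^sup>2)
      = (LINT x:{0..1}|lborel. (\<Sum>k\<in>K. \<Sum>m\<in>K. d k * d m * (cos_basis_deriv j k x * cos_basis_deriv j m x)))"
    by (simp add: power2_eq_square sum_product mult_ac)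
  also have "\<dots> = (\<Sum>k\<in>K. \<Sum>m\<in>K.
      LINT x:{0..1}|lborel. d k * d m * (cos_basis_deriv j k x * cos_basis_deriv j m x))"
    by (simp only: set_integral_sum borel_integrable_atLeastAtMost' continuous_intros
        continuous_on_cos_basis_deriv)
  also have "\<dots> = (\<Sum>k\<in>K. \<Sum>m\<in>K. d k * d m * (if k = m then cos_basis_deriv_weight j k else 0))"
    by (simp add: set_integral_cos_basis_deriv_mult)
  also have "\<dots> = (\<Sum>k\<in>K. (d k)\<^sup>2 * cos_basis_deriv_weight j k)"
    using assms by (simp add: power2_eq_square if_distrib sum.delta cong: if_cong)
  finally show ?thesis .
qed

lemma sums_set_integral_Icc_01:
  fixes u :: "nat \<Rightarrow> real \<Rightarrow> real"
  assumes cont: "\<And>k. continuous_on {0..1} (u k)"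
    and bound: "\<And>k x. x \<in> {0..1} \<Longrightarrow> \<bar>u k x\<bar> \<le> B k" and "summable B"
  shows "(\<lambda>k. LINT x:{0..1}|lborel. u k x) sums (LINT x:{0..1}|lborel. (\<Sum>k. u k x))"
proof -
  define v where "v k x = indicator {0..1::real} x * u k x" for k x
  have integrable: "integrable lborel (v k)" for k
    using borel_integrable_atLeastAtMost'[OF cont[of k]] by (simp add: v_def[abs_def] set_integrable_def)
  have v_bound: "\<bar>v k x\<bar> \<le> indicator {0..1} x * B k" for k x
    using bound[of x k] by (auto simp: v_def indicator_def)
  have "(\<lambda>k. integral\<^sup>L lborel (v k)) sums (\<integral>x. (\<Sum>k. v k x) \<partial>lborel)"
  proof (rule sums_integral[OF integrable])
    show "AE x in lborel. summable (\<lambda>k. norm (v k x))"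
      using v_bound
      by (intro AE_I2 summable_comparison_test[OF _ summable_mult[OF \<open>summable B\<close>]])
         (auto simp: mult.commute)
    have "(\<integral>x. norm (v k x) \<partial>lborel) \<le> (\<integral>x. indicator {0..1::real} x * B k \<partial>lborel)" for k
      using integrable v_bound
      by (intro Bochner_Integration.integral_mono) (auto intro!: integrable_real_mult_indicator)
    then show "summable (\<lambda>k. \<integral>x. norm (v k x) \<partial>lborel)"
      by (intro summable_comparison_test[OF _ \<open>summable B\<close>]) auto
  qed
  moreover have "(\<Sum>k. v k x) = indicator {0..1} x * (\<Sum>k. u k x)" for x
    by (cases "x \<in> {0..1}") (simp_all add: v_def)
  ultimately show ?thesis by (simp add: set_lebesgue_integral_def v_def[abs_def])
qed

lemma set_integral_cos_basis_of_sums: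
  fixes c :: "nat \<Rightarrow> real"
  assumes "summable (\<lambda>k. \<bar>c k\<bar>)" and f: "\<forall>x\<in>{0..1}. (\<lambda>k. c k * cos_basis k x) sums f x"
  shows "(LINT x:{0..1}|lborel. f x * cos_basis m x) = c m"
proof -
  have "(\<lambda>k. LINT x:{0..1}|lborel. c k * cos_basis k x * cos_basis m x) sums
        (LINT x:{0..1}|lborel. (\<Sum>k. c k * cos_basis k x * cos_basis m x))"
  proof (rule sums_set_integral_Icc_01)
    show "continuous_on {0..1} (\<lambda>x. c k * cos_basis k x * cos_basis m x)" for k
      using continuous_on_cos_basis_deriv[of _ 0]
      by (intro continuous_intros) (simp_all add: cos_basis_deriv_0[abs_def])
    have "\<bar>cos_basis k x\<bar> \<le> 3" for k x
      using abs_cos_basis_deriv_le[of 0 k x] by (simp add: cos_basis_deriv_0)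
    then show "\<bar>c k * cos_basis k x * cos_basis m x\<bar> \<le> \<bar>c k\<bar> * 9" for k x
      using mult_mono[of "\<bar>cos_basis k x\<bar>" 3 "\<bar>cos_basis m x\<bar>" 3]
      by (simp add: abs_mult mult_left_mono mult.assoc)
    show "summable (\<lambda>k. \<bar>c k\<bar> * 9)"
      using assms(1) by (rule summable_mult2)
  qed
  moreover have "(LINT x:{0..1}|lborel. c k * cos_basis k x * cos_basis m x) = (if k = m then c m else 0)"
    for k
    using set_integral_cos_basis_deriv_mult[of 0 k m]
    by (simp add: cos_basis_deriv_0 cos_basis_deriv_weight_def mult.assoc)
  moreover have "(LINT x:{0..1}|lborel. (\<Sum>k. c k * cos_basis k x * cos_basis m x))
      = (LINT x:{0..1}|lborel. f x * cos_basis m x)"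
    using f by (intro set_lebesgue_integral_cong) (auto intro!: sums_unique[symmetric] sums_mult2)
  ultimately have "(\<lambda>k. if k = m then c m else 0) sums (LINT x:{0..1}|lborel. f x * cos_basis m x)"
    by simp
  then show ?thesis
    using sums_single[of m "\<lambda>_. c m"] sums_unique2 by auto
qed

lemma abs_le_amgm:
  fixes u t :: real
  assumes "t > 0"
  shows "\<bar>u\<bar> \<le> (t * u\<^sup>2 + 1 / t) / 2"
proof -
  have "0 \<le> (t * \<bar>u\<bar> - 1)\<^sup>2 / t" using assms by simp
  also have "\<dots> = t * u\<^sup>2 - 2 * \<bar>u\<bar> + 1 / t"
    using assms by (simp add: power2_diff field_simps power2_eq_square)
  finally show ?thesis by simp
qed

lemma le_sqrt_of_amgm_bounds:
  fixes X Q :: real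
  assumes "Q \<ge> 0" and bounds: "\<And>t. t > 0 \<Longrightarrow> X \<le> (t * Q + 1 / t) / 2"
  shows "X \<le> sqrt Q"
proof (cases "Q > 0")
  case True
  have "X \<le> ((1 / sqrt Q) * Q + 1 / (1 / sqrt Q)) / 2" using True by (intro bounds) simp
  also have "\<dots> = sqrt Q" using True by (simp add: field_simps)
  finally show ?thesis .
next
  case False
  then have "Q = 0" using assms by simp
  show ?thesis
  proof (rule ccontr)
    assume "\<not> X \<le> sqrt Q"
    then have "X > 0" using \<open>Q = 0\<close> by simp
    then show False using bounds[of "1 / X"] \<open>Q = 0\<close> by simp
  qed
qed

text \<open>Cauchy--Schwarz against the indicator of \<open>[0,1]\<close>: integrate the pointwise AM--GM bound
  \<open>\<bar>u\<bar> \<le> (t u\<^sup>2 + 1/t) / 2\<close> and optimise over \<open>t\<close>.\<close>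

lemma integrable_and_integral_abs_le_sqrt_integral_square:
  fixes u :: "real \<Rightarrow> real"
  assumes [measurable]: "u \<in> borel_measurable lborel" and zero: "\<And>x. x \<notin> {0..1} \<Longrightarrow> u x = 0"
    and square: "integrable lborel (\<lambda>x. (u x)\<^sup>2)"
  shows "integrable lborel u \<and> (\<integral>x. \<bar>u x\<bar> \<partial>lborel) \<le> sqrt (\<integral>x. (u x)\<^sup>2 \<partial>lborel)"
proof -
  have indicator: "integrable lborel (indicator {0..1::real} :: real \<Rightarrow> real)" by simp
  have bound: "\<bar>u x\<bar> \<le> (t * (u x)\<^sup>2 + indicator {0..1} x / t) / 2" if "t > 0" for t x
    using abs_le_amgm[OF that, of "u x"] zero[of x] by (cases "x \<in> {0..1}") simp_all
  have integrable: "integrable lborel u"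
    by (rule Bochner_Integration.integrable_bound[where f = "\<lambda>x. ((u x)\<^sup>2 + indicator {0..1} x) / 2"])
       (use square indicator bound[of 1] in \<open>auto intro!: AE_I2\<close>)
  have "(\<integral>x. \<bar>u x\<bar> \<partial>lborel) \<le> sqrt (\<integral>x. (u x)\<^sup>2 \<partial>lborel)"
  proof (rule le_sqrt_of_amgm_bounds)
    fix t :: real assume "t > 0"
    have "(\<integral>x. \<bar>u x\<bar> \<partial>lborel) \<le> (\<integral>x. (t * (u x)\<^sup>2 + indicator {0..1::real} x / t) / 2 \<partial>lborel)"
      by (rule Bochner_Integration.integral_mono) (use integrable square indicator bound \<open>t > 0\<close> in auto)
    also have "\<dots> = (t * (\<integral>x. (u x)\<^sup>2 \<partial>lborel) + 1 / t) / 2"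
      using square indicator by (simp add: divide_simps)
    finally show "(\<integral>x. \<bar>u x\<bar> \<partial>lborel) \<le> (t * (\<integral>x. (u x)\<^sup>2 \<partial>lborel) + 1 / t) / 2" .
  qed simp
  with integrable show ?thesis by simp
qed

lemma integrable_square_and_integral_le_of_tendsto:
  fixes v :: "nat \<Rightarrow> 'a \<Rightarrow> real"
  assumes [measurable]: "\<And>i. v i \<in> borel_measurable M" "v0 \<in> borel_measurable M"
    and lim: "AE x in M. (\<lambda>i. v i x) \<longlonglongrightarrow> v0 x"
    and bound: "eventually (\<lambda>i. integrable M (\<lambda>x. (v i x)\<^sup>2) \<and> (\<integral>x. (v i x)\<^sup>2 \<partial>M) \<le> B) sequentially"
    and "B \<ge> 0"
  shows "integrable M (\<lambda>x. (v0 x)\<^sup>2) \<and> (\<integral>x. (v0 x)\<^sup>2 \<partial>M) \<le> B"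
proof -
  have "AE x in M. ennreal ((v0 x)\<^sup>2) = liminf (\<lambda>i. ennreal ((v i x)\<^sup>2))"
    using lim
    by eventually_elim (rule lim_imp_Liminf[symmetric], auto intro: tendsto_ennrealI tendsto_power)
  then have "(\<integral>\<^sup>+x. ennreal ((v0 x)\<^sup>2) \<partial>M) = (\<integral>\<^sup>+x. liminf (\<lambda>i. ennreal ((v i x)\<^sup>2)) \<partial>M)"
    by (rule nn_integral_cong_AE)
  also have "\<dots> \<le> liminf (\<lambda>i. \<integral>\<^sup>+x. ennreal ((v i x)\<^sup>2) \<partial>M)"
    by (rule nn_integral_liminf) simp
  also have "\<dots> \<le> limsup (\<lambda>i. \<integral>\<^sup>+x. ennreal ((v i x)\<^sup>2) \<partial>M)"
    by (rule Liminf_le_Limsup) simp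
  also have "\<dots> \<le> ennreal B"
    using bound
    by (intro Limsup_bounded, eventually_elim) (simp add: nn_integral_eq_integral ennreal_leI)
  finally have finite: "(\<integral>\<^sup>+x. ennreal ((v0 x)\<^sup>2) \<partial>M) \<le> ennreal B" .
  then have integrable: "integrable M (\<lambda>x. (v0 x)\<^sup>2)"
    by (intro integrableI_nonneg) (auto simp: top_unique less_top[symmetric] intro: le_less_trans)
  then have "ennreal (\<integral>x. (v0 x)\<^sup>2 \<partial>M) \<le> ennreal B"
    using finite by (simp add: nn_integral_eq_integral)
  with integrable \<open>B \<ge> 0\<close> show ?thesis by (simp add: ennreal_le_iff)
qed

lemma AE_eq_0_of_integral_greaterThan_eq_0:
  fixes u :: "real \<Rightarrow> real"
  assumes "integrable lborel u" and tails: "\<And>y. (\<integral>x. indicator {y<..} x * u x \<partial>lborel) = 0"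
  shows "AE x in lborel. u x = 0"
proof -
  have [measurable]: "u \<in> borel_measurable lborel" using assms(1) by auto
  define P where "P = (\<lambda>x. ennreal (max 0 (u x)))"
  define N where "N = (\<lambda>x. ennreal (max 0 (- u x)))"
  have tail_integrable: "integrable lborel (\<lambda>x. indicator {y<..} x * u x)" for y
    using integrable_real_mult_indicator[OF _ assms(1), of "{y<..}"] by (simp add: mult.commute)
  have emeasure_density: "emeasure (density lborel (\<lambda>x. ennreal (max 0 (w x)))) {y<..}
      = ennreal (\<integral>x. indicator {y<..} x * max 0 (w x) \<partial>lborel)"
    if "w = u \<or> w = (\<lambda>x. - u x)" for w y
  proof -
    have [measurable]: "w \<in> borel_measurable lborel" using that by auto
    have "integrable lborel (\<lambda>x. indicator {y<..} x * max 0 (w x))"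
      by (rule Bochner_Integration.integrable_bound[OF tail_integrable[of y]])
         (use that in \<open>auto simp: indicator_def\<close>)
    then show ?thesis
      by (subst emeasure_density, simp, simp, subst nn_integral_eq_integral[symmetric])
         (auto intro!: nn_integral_cong simp: indicator_def)
  qed
  have "density lborel P = density lborel N"
  proof (rule measure_eqI_lessThan)
    show "emeasure (density lborel P) {x<..} < \<infinity>" for x
      unfolding P_def using emeasure_density[of u x] by simp
    fix y :: real
    have "(\<lambda>x. indicator {y<..} x * max 0 (u x))
        = (\<lambda>x. indicator {y<..} x * max 0 (- u x) + indicator {y<..} x * u x)"
      by (auto simp: fun_eq_iff indicator_def)
    then have "(\<integral>x. indicator {y<..} x * max 0 (u x) \<partial>lborel)
        = (\<integral>x. indicator {y<..} x * max 0 (- u x) \<partial>lborel)"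
      using tails[of y] tail_integrable[of y]
        Bochner_Integration.integrable_bound[OF tail_integrable[of y],
          of "\<lambda>x. indicator {y<..} x * max 0 (- u x)"]
      by (simp add: indicator_def)
    then show "emeasure (density lborel P) {y<..} = emeasure (density lborel N) {y<..}"
      using emeasure_density[of u y] emeasure_density[of "\<lambda>x. - u x" y] by (simp add: P_def N_def)
  qed (auto simp: P_def N_def)
  then have "AE x in lborel. P x = N x"
    by (intro sigma_finite_measure.density_unique[OF sigma_finite_lborel]) (auto simp: P_def N_def)
  then show ?thesis by eventually_elim (auto simp: P_def N_def max_def split: if_splits)
qed

lemma AE_eq_0_of_set_integral_Icc_01_eq_0:
  fixes u :: "real \<Rightarrow> real"
  assumes integrable: "integrable lborel u" and zero: "\<And>x. x \<notin> {0..1} \<Longrightarrow> u x = 0"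
    and primitive: "\<And>x. x \<in> {0..1} \<Longrightarrow> (LINT t:{0..x}|lborel. u t) = 0"
  shows "AE x in lborel. u x = 0"
proof (rule AE_eq_0_of_integral_greaterThan_eq_0[OF integrable])
  fix y :: real
  have part_integrable: "integrable lborel (\<lambda>x. indicator {0..y} x * u x)"
    using integrable_real_mult_indicator[OF _ integrable, of "{0..y}"] by (simp add: mult.commute)
  consider "y < 0" | "y \<ge> 1" | "0 \<le> y" "y < 1" by linarith
  then show "(\<integral>x. indicator {y<..} x * u x \<partial>lborel) = 0"
  proof cases
    case 1
    then have "(\<lambda>x. indicator {y<..} x * u x) = (\<lambda>x. indicator {0..1} x * u x)"
      using zero by (auto simp: fun_eq_iff indicator_def)
    then show ?thesis using primitive[of 1] by (simp add: set_lebesgue_integral_def)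
  next
    case 2
    then have "(\<lambda>x. indicator {y<..} x * u x) = (\<lambda>x. 0)"
      using zero by (auto simp: fun_eq_iff indicator_def)
    then show ?thesis by simp
  next
    case 3
    then have "(\<lambda>x. indicator {y<..} x * u x) = (\<lambda>x. indicator {0..1} x * u x - indicator {0..y} x * u x)"
      using zero by (auto simp: fun_eq_iff indicator_def)
    then show ?thesis
      using primitive[of 1] primitive[of y] 3 part_integrable
        integrable_real_mult_indicator[OF _ integrable, of "{0..1}"]
      by (simp add: set_lebesgue_integral_def mult.commute)
  qed
qed

lemma divide_le_square_add_inverse_square:
  fixes u :: real and k :: nat
  assumes "k \<ge> 1" "u \<ge> 0"
  shows "u / real k \<le> u\<^sup>2 + inverse (real k ^ 2)"
proof -
  have "0 \<le> (u - 1 / real k)\<^sup>2" by simp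
  also have "\<dots> = u\<^sup>2 - 2 * (u / real k) + inverse (real k ^ 2)"
    using assms by (simp add: power2_diff field_simps power2_eq_square)
  moreover have "u / real k \<ge> 0" using assms by simp
  ultimately show ?thesis by linarith
qed

section \<open>Cosine series with square-summable weighted coefficients\<close>

text \<open>\<open>energy\<close> is \<open>\<gamma>\<close> times the non-constant part of the squared cosine norm.\<close>

locale cos_series =
  fixes a :: nat and c :: "nat \<Rightarrow> real"
  assumes order_pos: "a \<ge> 1"
    and summable_energy: "summable (\<lambda>k. (c k)\<^sup>2 * real k ^ (2 * a))"
begin

definition energy :: real where
  "energy = (\<Sum>k. (c k)\<^sup>2 * real k ^ (2 * a))"

definition energy_tail :: "nat \<Rightarrow> real" where
  "energy_tail N = energy - (\<Sum>k<N. (c k)\<^sup>2 * real k ^ (2 * a))"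

definition deriv_series :: "nat \<Rightarrow> real \<Rightarrow> real" where
  "deriv_series j x = (\<Sum>k. c k * cos_basis_deriv j k x)"

definition partial_deriv_series :: "nat \<Rightarrow> nat \<Rightarrow> real \<Rightarrow> real" where
  "partial_deriv_series j n x = (\<Sum>k<n. c k * cos_basis_deriv j k x)"

lemma energy_nonneg: "energy \<ge> 0"
  unfolding energy_def by (intro suminf_nonneg summable_energy) simp

lemma energy_tail_LIMSEQ: "energy_tail \<longlonglongrightarrow> 0"
  using tendsto_diff[OF tendsto_const summable_LIMSEQ[OF summable_energy], of energy]
  by (simp add: energy_tail_def[abs_def] energy_def)

lemma scaled_energy_tail_LIMSEQ: "(\<lambda>N. C * energy_tail N) \<longlonglongrightarrow> 0"
  by (rule tendsto_mult_right_zero[OF energy_tail_LIMSEQ])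

lemma sum_energy_le_energy_tail:
  assumes "N \<le> n"
  shows "(\<Sum>k\<in>{n..<m}. (c k)\<^sup>2 * real k ^ (2 * a)) \<le> energy_tail N"
proof -
  have "(\<Sum>k\<in>{n..<m}. (c k)\<^sup>2 * real k ^ (2 * a)) \<le> (\<Sum>k\<in>{N..<max m N}. (c k)\<^sup>2 * real k ^ (2 * a))"
    using assms by (intro sum_mono2) auto
  also have "\<dots> = (\<Sum>k<max m N. (c k)\<^sup>2 * real k ^ (2 * a)) - (\<Sum>k<N. (c k)\<^sup>2 * real k ^ (2 * a))"
    using sum.union_disjoint[of "{..<N}" "{N..<max m N}" "\<lambda>k. (c k)\<^sup>2 * real k ^ (2 * a)"]
      ivl_disj_un_one(2)[of N "max m N"] by (simp add: ivl_disj_int_one)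
  also have "\<dots> \<le> energy_tail N"
    unfolding energy_tail_def energy_def
    by (intro diff_right_mono sum_le_suminf summable_energy) auto
  finally show ?thesis .
qed

lemma summable_abs_mult_power:
  assumes "j < a"
  shows "summable (\<lambda>k. \<bar>c k\<bar> * real k ^ j)"
proof (rule summable_comparison_test_ev)
  show "summable (\<lambda>k. (c k)\<^sup>2 * real k ^ (2 * a) + inverse (real k ^ 2))"
    by (intro summable_add summable_energy inverse_power_summable) simp
  show "\<forall>\<^sub>F k in sequentially.
      norm (\<bar>c k\<bar> * real k ^ j) \<le> (c k)\<^sup>2 * real k ^ (2 * a) + inverse (real k ^ 2)"
    using eventually_ge_at_top[of "1::nat"]
  proof eventually_elim
    case (elim k)
    have "\<bar>c k\<bar> * real k ^ j \<le> \<bar>c k\<bar> * real k ^ (a - 1)"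
      using assms elim by (intro mult_left_mono power_increasing) auto
    also have "\<dots> = (\<bar>c k\<bar> * real k ^ a) / real k"
      using order_pos elim by (simp add: power_diff)
    also have "\<dots> \<le> (\<bar>c k\<bar> * real k ^ a)\<^sup>2 + inverse (real k ^ 2)"
      using elim by (intro divide_le_square_add_inverse_square) auto
    finally show ?case by (simp add: power_mult_distrib power_mult[symmetric] mult.commute)
  qed
qed

lemma summable_cos_basis_deriv_majorant:
  assumes "j < a"
  shows "summable (\<lambda>k. \<bar>c k\<bar> * (2 * (pi * real k) ^ j + 1))"
proof -
  have "summable (\<lambda>k. (2 * pi ^ j) * (\<bar>c k\<bar> * real k ^ j) + \<bar>c k\<bar> * real k ^ 0)"
    using assms order_pos by (intro summable_add summable_mult summable_abs_mult_power) auto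
  then show ?thesis by (simp add: algebra_simps power_mult_distrib)
qed

lemma abs_cos_series_term_le: "\<bar>c k * cos_basis_deriv j k x\<bar> \<le> \<bar>c k\<bar> * (2 * (pi * real k) ^ j + 1)"
  by (simp add: abs_mult mult_left_mono abs_cos_basis_deriv_le)

lemma summable_cos_series_term: "j < a \<Longrightarrow> summable (\<lambda>k. c k * cos_basis_deriv j k x)"
  by (rule summable_comparison_test[OF _ summable_cos_basis_deriv_majorant])
     (auto intro: abs_cos_series_term_le)

lemma sums_deriv_series: "j < a \<Longrightarrow> (\<lambda>k. c k * cos_basis_deriv j k x) sums deriv_series j x"
  unfolding deriv_series_def by (rule summable_sums[OF summable_cos_series_term])

lemma uniform_limit_partial_deriv_series:
  "j < a \<Longrightarrow> uniform_limit S (partial_deriv_series j) (deriv_series j) sequentially"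
  unfolding deriv_series_def[abs_def] partial_deriv_series_def[abs_def]
  by (rule Weierstrass_m_test[OF _ summable_cos_basis_deriv_majorant]) (auto intro: abs_cos_series_term_le)

lemma continuous_on_partial_deriv_series: "continuous_on S (partial_deriv_series j n)"
  unfolding partial_deriv_series_def by (intro continuous_intros continuous_on_cos_basis_deriv)

lemma continuous_on_deriv_series: "j < a \<Longrightarrow> continuous_on S (deriv_series j)"
  by (rule uniform_limit_theorem[OF _ uniform_limit_partial_deriv_series])
     (auto intro: always_eventually continuous_on_partial_deriv_series)

lemma has_real_derivative_deriv_series:
  assumes "Suc j < a"
  shows "(deriv_series j has_real_derivative deriv_series (Suc j) x) (at x within S)"
proof -
  have "\<exists>g. \<forall>x\<in>UNIV. (\<lambda>k. c k * cos_basis_deriv j k x) sums g x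
      \<and> (g has_field_derivative deriv_series (Suc j) x) (at x within UNIV)"
    by (rule has_field_derivative_series[where ?x0.0 = 0])
       (use assms in \<open>auto intro!: DERIV_cmult has_real_derivative_cos_basis_deriv summable_cos_series_term
          uniform_limit_partial_deriv_series[unfolded partial_deriv_series_def[abs_def]]\<close>)
  then obtain g where g: "\<And>x. (\<lambda>k. c k * cos_basis_deriv j k x) sums g x"
      "\<And>x. (g has_real_derivative deriv_series (Suc j) x) (at x)"
    by auto
  have "g = deriv_series j"
  proof
    show "g x = deriv_series j x" for x
      by (rule sums_unique2[OF g(1) sums_deriv_series]) (use assms in simp)
  qed
  then show ?thesis using g(2) by (auto intro: has_field_derivative_at_within)
qed

lemma cos_basis_deriv_weight_le:
  assumes "1 \<le> j" "j \<le> a"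
  shows "(c k)\<^sup>2 * cos_basis_deriv_weight j k \<le> pi ^ (2 * j) * ((c k)\<^sup>2 * real k ^ (2 * a))"
proof (cases "k = 0")
  case False
  then have "real k ^ (2 * j) \<le> real k ^ (2 * a)"
    using assms by (intro power_increasing) auto
  then show ?thesis
    using False
    by (simp add: cos_basis_deriv_weight_def power_mult_distrib mult_left_mono mult.left_commute)
qed (use assms in \<open>simp add: cos_basis_deriv_weight_def\<close>)

lemma cos_basis_deriv_weight_top:
  "(c k)\<^sup>2 * cos_basis_deriv_weight a k = pi ^ (2 * a) * ((c k)\<^sup>2 * real k ^ (2 * a))"
  using order_pos by (simp add: cos_basis_deriv_weight_def power_mult_distrib)

lemma set_integral_square_partial_deriv_series_le:
  assumes "1 \<le> j" "j \<le> a"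
  shows "(LINT x:{0..1}|lborel. (partial_deriv_series j n x)\<^sup>2) \<le> pi ^ (2 * j) * energy"
proof -
  have "(LINT x:{0..1}|lborel. (partial_deriv_series j n x)\<^sup>2)
      = (\<Sum>k<n. (c k)\<^sup>2 * cos_basis_deriv_weight j k)"
    by (simp add: partial_deriv_series_def set_integral_square_sum_cos_basis_deriv)
  also have "\<dots> \<le> pi ^ (2 * j) * (\<Sum>k<n. (c k)\<^sup>2 * real k ^ (2 * a))"
    using cos_basis_deriv_weight_le[OF assms] by (simp add: sum_distrib_left sum_mono)
  also have "\<dots> \<le> pi ^ (2 * j) * energy"
    unfolding energy_def by (intro mult_left_mono sum_le_suminf summable_energy) auto
  finally show ?thesis .
qed

lemma set_integral_square_partial_diff_le:
  assumes "N \<le> n" "N \<le> m"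
  shows "(LINT x:{0..1}|lborel. (partial_deriv_series a m x - partial_deriv_series a n x)\<^sup>2)
      \<le> pi ^ (2 * a) * energy_tail N"
proof -
  have le: "(LINT x:{0..1}|lborel. (partial_deriv_series a m x - partial_deriv_series a n x)\<^sup>2)
      \<le> pi ^ (2 * a) * energy_tail N" if "N \<le> n" "n \<le> m" for n m
  proof -
    have "partial_deriv_series a m x - partial_deriv_series a n x
        = (\<Sum>k\<in>{n..<m}. c k * cos_basis_deriv a k x)" for x
      using sum.union_disjoint[of "{..<n}" "{n..<m}" "\<lambda>k. c k * cos_basis_deriv a k x"]
        ivl_disj_un_one(2)[OF \<open>n \<le> m\<close>]
      by (simp add: partial_deriv_series_def ivl_disj_int_one)
    then have "(LINT x:{0..1}|lborel. (partial_deriv_series a m x - partial_deriv_series a n x)\<^sup>2)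
        = pi ^ (2 * a) * (\<Sum>k\<in>{n..<m}. (c k)\<^sup>2 * real k ^ (2 * a))"
      by (simp add: set_integral_square_sum_cos_basis_deriv cos_basis_deriv_weight_top sum_distrib_left)
    also have "\<dots> \<le> pi ^ (2 * a) * energy_tail N"
      using sum_energy_le_energy_tail[OF \<open>N \<le> n\<close>] by (intro mult_left_mono) auto
    finally show ?thesis .
  qed
  show ?thesis
  proof (cases "n \<le> m")
    case False
    then show ?thesis using le[of m n] assms by (simp add: power2_commute)
  qed (use le assms in simp)
qed

lemma set_integral_square_deriv_series_le:
  assumes "1 \<le> j" "j < a"
  shows "(LINT x:{0..1}|lborel. (deriv_series j x)\<^sup>2) \<le> pi ^ (2 * j) * energy"
proof -
  have [measurable]: "partial_deriv_series j n \<in> borel_measurable borel"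
      "deriv_series j \<in> borel_measurable borel" for n
    using assms by (auto intro!: borel_measurable_continuous_onI continuous_on_partial_deriv_series
        continuous_on_deriv_series)
  have "integrable lborel (\<lambda>x. (indicator {0..1} x * deriv_series j x)\<^sup>2)
      \<and> (\<integral>x. (indicator {0..1} x * deriv_series j x)\<^sup>2 \<partial>lborel) \<le> pi ^ (2 * j) * energy"
  proof (rule integrable_square_and_integral_le_of_tendsto)
    show "AE x in lborel. (\<lambda>n. indicator {0..1} x * partial_deriv_series j n x)
        \<longlonglongrightarrow> indicator {0..1} x * deriv_series j x"
      using sums_deriv_series assms
      by (intro AE_I2 tendsto_mult_left) (simp add: sums_def partial_deriv_series_def)
    have "integrable lborel (\<lambda>x. (indicator {0..1} x * partial_deriv_series j n x)\<^sup>2)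
        \<and> (\<integral>x. (indicator {0..1} x * partial_deriv_series j n x)\<^sup>2 \<partial>lborel) \<le> pi ^ (2 * j) * energy" for n
      using set_integral_square_partial_deriv_series_le[of j n] assms
        borel_integrable_atLeastAtMost'[of 0 1 "\<lambda>x. (partial_deriv_series j n x)\<^sup>2"]
      by (simp add: set_lebesgue_integral_def set_integrable_def indicator_mult_square
          continuous_intros continuous_on_partial_deriv_series)
    then show "\<forall>\<^sub>F n in sequentially.
        integrable lborel (\<lambda>x. (indicator {0..1} x * partial_deriv_series j n x)\<^sup>2)
        \<and> (\<integral>x. (indicator {0..1} x * partial_deriv_series j n x)\<^sup>2 \<partial>lborel) \<le> pi ^ (2 * j) * energy"
      by simp
  qed (use energy_nonneg in auto)
  then show ?thesis
    by (simp add: set_lebesgue_integral_def indicator_mult_square)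
qed

subsection \<open>The weak top derivative\<close>

text \<open>Partial sums of the formal \<open>a\<close>-th derivative, cut off outside \<open>[0,1]\<close> so that they live
  on \<open>lborel\<close>. They are \<open>L\<^sup>2\<close>-Cauchy; an a.e.\ limit of a subsequence is the weak derivative.\<close>

definition top_partial :: "nat \<Rightarrow> real \<Rightarrow> real" where
  "top_partial n x = indicator {0..1} x * partial_deriv_series a n x"

lemma borel_measurable_top_partial [measurable]: "top_partial n \<in> borel_measurable lborel"
  using borel_measurable_continuous_onI[OF continuous_on_partial_deriv_series[of UNIV a n]]
  unfolding top_partial_def[abs_def] by measurable

lemma top_partial_zero: "x \<notin> {0..1} \<Longrightarrow> top_partial n x = 0"
  by (simp add: top_partial_def)

lemma integrable_top_partial: "integrable lborel (top_partial n)"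
  using borel_integrable_atLeastAtMost'[OF continuous_on_partial_deriv_series[of "{0..1}" a n]]
  by (simp add: set_integrable_def top_partial_def[abs_def])

lemma integral_square_top_partial_diff_le:
  assumes "N \<le> n" "N \<le> m"
  shows "integrable lborel (\<lambda>x. (top_partial m x - top_partial n x)\<^sup>2)
    \<and> (\<integral>x. (top_partial m x - top_partial n x)\<^sup>2 \<partial>lborel) \<le> pi ^ (2 * a) * energy_tail N"
proof -
  have "(\<lambda>x. (top_partial m x - top_partial n x)\<^sup>2)
      = (\<lambda>x. indicator {0..1} x * (partial_deriv_series a m x - partial_deriv_series a n x)\<^sup>2)"
    by (auto simp: fun_eq_iff top_partial_def indicator_def)
  moreover have
    "set_integrable lborel {0..1} (\<lambda>x. (partial_deriv_series a m x - partial_deriv_series a n x)\<^sup>2)"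
    by (intro borel_integrable_atLeastAtMost' continuous_intros continuous_on_partial_deriv_series)
  ultimately show ?thesis
    using set_integral_square_partial_diff_le[OF assms]
    by (simp add: set_integrable_def set_lebesgue_integral_def)
qed

lemma integral_square_top_partial_le:
  "integrable lborel (\<lambda>x. (top_partial n x)\<^sup>2) \<and> (\<integral>x. (top_partial n x)\<^sup>2 \<partial>lborel) \<le> pi ^ (2 * a) * energy"
  using set_integral_square_partial_deriv_series_le[of a n] order_pos
    borel_integrable_atLeastAtMost'[of 0 1 "\<lambda>x. (partial_deriv_series a n x)\<^sup>2"]
  by (simp add: top_partial_def[abs_def] set_lebesgue_integral_def set_integrable_def indicator_mult_square
      continuous_intros continuous_on_partial_deriv_series)

lemma set_integral_partial_deriv_series_top:
  assumes "x \<ge> 0"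
  shows "(LINT t:{0..x}|lborel. partial_deriv_series a n t)
      = partial_deriv_series (a - 1) n x - partial_deriv_series (a - 1) n 0"
proof (rule set_integral_FTC_Icc)
  show "(partial_deriv_series (a - 1) n has_real_derivative partial_deriv_series a n t) (at t)" for t
    using has_real_derivative_cos_basis_deriv[of "a - 1"] order_pos
    by (auto simp: partial_deriv_series_def[abs_def] intro!: DERIV_sum DERIV_cmult)
qed (use assms in \<open>auto intro: continuous_on_partial_deriv_series\<close>)

lemma top_partial_L1_Cauchy:
  assumes "e > 0"
  shows "\<exists>N. \<forall>i\<ge>N. \<forall>j\<ge>N. (LINT x|lborel. norm (top_partial i x - top_partial j x)) < e"
proof -
  have "eventually (\<lambda>N. pi ^ (2 * a) * energy_tail N < e\<^sup>2) sequentially"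
    using assms by (intro order_tendstoD(2)[OF scaled_energy_tail_LIMSEQ]) auto
  then obtain N where N: "pi ^ (2 * a) * energy_tail N < e\<^sup>2"
    by (auto simp: eventually_sequentially)
  have "(LINT x|lborel. norm (top_partial i x - top_partial j x)) < e" if "i \<ge> N" "j \<ge> N" for i j
  proof -
    have "(LINT x|lborel. \<bar>top_partial i x - top_partial j x\<bar>)
        \<le> sqrt (\<integral>x. (top_partial i x - top_partial j x)\<^sup>2 \<partial>lborel)"
      using integrable_and_integral_abs_le_sqrt_integral_square[of "\<lambda>x. top_partial i x - top_partial j x"]
        integral_square_top_partial_diff_le[of N j i] that
      by (auto simp: top_partial_zero)
    also have "\<dots> < sqrt (e\<^sup>2)"
      using integral_square_top_partial_diff_le[of N j i] that N by (intro real_sqrt_less_mono) linarith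
    finally show ?thesis using assms by simp
  qed
  then show ?thesis by blast
qed

lemma top_partial_AE_convergent_subseq:
  obtains r h where "strict_mono r" "h \<in> borel_measurable lborel" "\<And>x. x \<notin> {0..1} \<Longrightarrow> h x = 0"
    "AE x in lborel. (\<lambda>i. top_partial (r i) x) \<longlonglongrightarrow> h x"
proof -
  obtain r where r: "strict_mono r" "AE x in lborel. Cauchy (\<lambda>i. top_partial (r i) x)"
    using cauchy_L1_AE_cauchy_subseq[OF integrable_top_partial top_partial_L1_Cauchy] by blast
  define h where "h x = lim (\<lambda>i. top_partial (r i) x)" for x
  have "h \<in> borel_measurable lborel"
    unfolding h_def[abs_def] by (rule borel_measurable_lim_metric) simp
  moreover have "h x = 0" if "x \<notin> {0..1}" for x
    using that by (simp add: h_def top_partial_def)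
  moreover have "AE x in lborel. (\<lambda>i. top_partial (r i) x) \<longlonglongrightarrow> h x"
    using r(2) by eventually_elim (simp add: h_def Cauchy_convergent_iff convergent_LIMSEQ_iff)
  ultimately show ?thesis using r(1) that by blast
qed

context
  fixes r h
  assumes r: "strict_mono r" and h_measurable [measurable]: "h \<in> borel_measurable lborel"
    and h_zero: "\<And>x. x \<notin> {0..1} \<Longrightarrow> h x = 0"
    and h_lim: "AE x in lborel. (\<lambda>i. top_partial (r i) x) \<longlonglongrightarrow> h x"
begin

lemma integral_square_top_partial_limit_le:
  "integrable lborel (\<lambda>x. (h x)\<^sup>2) \<and> (\<integral>x. (h x)\<^sup>2 \<partial>lborel) \<le> pi ^ (2 * a) * energy"
  using integral_square_top_partial_le energy_nonneg
  by (intro integrable_square_and_integral_le_of_tendsto[OF _ _ h_lim] always_eventually) auto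

lemma integral_square_top_partial_limit_diff_le:
  "integrable lborel (\<lambda>x. (top_partial (r i) x - h x)\<^sup>2)
    \<and> (\<integral>x. (top_partial (r i) x - h x)\<^sup>2 \<partial>lborel) \<le> pi ^ (2 * a) * energy_tail (r i)"
proof (rule integrable_square_and_integral_le_of_tendsto
    [where v = "\<lambda>j x. top_partial (r i) x - top_partial (r j) x"])
  show "AE x in lborel. (\<lambda>j. top_partial (r i) x - top_partial (r j) x) \<longlonglongrightarrow> top_partial (r i) x - h x"
    using h_lim by eventually_elim (intro tendsto_diff tendsto_const)
  show "\<forall>\<^sub>F j in sequentially. integrable lborel (\<lambda>x. (top_partial (r i) x - top_partial (r j) x)\<^sup>2)
      \<and> (\<integral>x. (top_partial (r i) x - top_partial (r j) x)\<^sup>2 \<partial>lborel) \<le> pi ^ (2 * a) * energy_tail (r i)"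
    using eventually_ge_at_top[of i]
  proof eventually_elim
    case (elim j)
    then have "r i \<le> r j" using r by (simp add: strict_mono_less_eq)
    then show ?case using integral_square_top_partial_diff_le[of "r i" "r j" "r i"] by simp
  qed
  show "0 \<le> pi ^ (2 * a) * energy_tail (r i)"
    using sum_energy_le_energy_tail[of "r i" "r i" "r i"] by simp
qed auto

lemma integrable_top_partial_limit: "integrable lborel h"
  using integrable_and_integral_abs_le_sqrt_integral_square[OF h_measurable h_zero]
    integral_square_top_partial_limit_le by blast

lemma set_integral_top_partial_limit_diff_le:
  assumes x: "x \<in> {0..1}"
  shows "norm ((LINT t:{0..x}|lborel. partial_deriv_series a (r i) t) - (LINT t:{0..x}|lborel. h t))
      \<le> sqrt (pi ^ (2 * a) * energy_tail (r i))"
proof -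
  have integrable_Icc: "integrable lborel (\<lambda>t. indicator {0..x} t * q t)"
    if "integrable lborel q" for q :: "real \<Rightarrow> real"
    using integrable_real_mult_indicator[OF _ that, of "{0..x}"] by (simp add: mult.commute)
  have cut_off: "(\<lambda>t. indicator {0..x} t * top_partial n t)
      = (\<lambda>t. indicator {0..x} t * partial_deriv_series a n t)" for n
    using x by (auto simp: fun_eq_iff top_partial_def split: split_indicator)
  have "(LINT t:{0..x}|lborel. partial_deriv_series a (r i) t) - (LINT t:{0..x}|lborel. h t)
      = (\<integral>t. indicator {0..x} t * (top_partial (r i) t - h t) \<partial>lborel)"
    using x integrable_Icc[OF integrable_top_partial_limit] integrable_Icc[OF integrable_top_partial]
    by (simp add: set_lebesgue_integral_def right_diff_distrib cut_off)
  also have "\<bar>\<dots>\<bar> \<le> (\<integral>t. \<bar>top_partial (r i) t - h t\<bar> \<partial>lborel)"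
    by (rule integral_abs_bound_integral)
       (use integrable_Icc integrable_top_partial_limit integrable_top_partial in
         \<open>auto simp: indicator_def intro!: Bochner_Integration.integrable_diff\<close>)
  also have "\<dots> \<le> sqrt (\<integral>t. (top_partial (r i) t - h t)\<^sup>2 \<partial>lborel)"
    using integrable_and_integral_abs_le_sqrt_integral_square[of "\<lambda>t. top_partial (r i) t - h t"]
      integral_square_top_partial_limit_diff_le[of i] h_zero
    by (auto simp: top_partial_zero)
  also have "\<dots> \<le> sqrt (pi ^ (2 * a) * energy_tail (r i))"
    using integral_square_top_partial_limit_diff_le[of i] by simp
  finally show ?thesis by simp
qed

lemma top_partial_limit_primitive:
  assumes x: "x \<in> {0..1}"
  shows "(LINT t:{0..x}|lborel. h t) = deriv_series (a - 1) x - deriv_series (a - 1) 0"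
proof -
  have bound_lim: "(\<lambda>i. sqrt (pi ^ (2 * a) * energy_tail (r i))) \<longlonglongrightarrow> 0"
    using tendsto_real_sqrt[OF LIMSEQ_subseq_LIMSEQ[OF scaled_energy_tail_LIMSEQ r]]
    by (simp add: comp_def)
  have "(\<lambda>i. LINT t:{0..x}|lborel. partial_deriv_series a (r i) t) \<longlonglongrightarrow> (LINT t:{0..x}|lborel. h t)"
    by (rule LIM_zero_cancel, rule Lim_null_comparison[OF always_eventually bound_lim])
       (intro allI set_integral_top_partial_limit_diff_le x)
  moreover have "(\<lambda>i. LINT t:{0..x}|lborel. partial_deriv_series a (r i) t)
      = (\<lambda>i. partial_deriv_series (a - 1) (r i) x - partial_deriv_series (a - 1) (r i) 0)"
    using x by (simp add: set_integral_partial_deriv_series_top)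
  moreover have "(\<lambda>i. partial_deriv_series (a - 1) (r i) x - partial_deriv_series (a - 1) (r i) 0)
      \<longlonglongrightarrow> deriv_series (a - 1) x - deriv_series (a - 1) 0"
    using LIMSEQ_subseq_LIMSEQ[OF tendsto_diff[OF sums_deriv_series[of "a - 1" x, unfolded sums_def]
        sums_deriv_series[of "a - 1" 0, unfolded sums_def]] r] order_pos
    by (simp add: comp_def partial_deriv_series_def)
  ultimately show ?thesis by (metis LIMSEQ_unique)
qed

end

lemma top_deriv_exists:
  obtains h where "h \<in> borel_measurable lborel" "\<And>x. x \<notin> {0..1} \<Longrightarrow> h x = 0"
    "integrable lborel (\<lambda>x. (h x)\<^sup>2)" "(\<integral>x. (h x)\<^sup>2 \<partial>lborel) \<le> pi ^ (2 * a) * energy"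
    "\<And>x. x \<in> {0..1} \<Longrightarrow> (LINT t:{0..x}|lborel. h t) = deriv_series (a - 1) x - deriv_series (a - 1) 0"
proof -
  obtain r h where "strict_mono r" "h \<in> borel_measurable lborel" "\<And>x. x \<notin> {0..1} \<Longrightarrow> h x = 0"
    "AE x in lborel. (\<lambda>i. top_partial (r i) x) \<longlonglongrightarrow> h x"
    using top_partial_AE_convergent_subseq by blast
  note limit = this
  show ?thesis
    by (rule that[OF limit(2,3)])
       (use integral_square_top_partial_limit_le[OF limit] top_partial_limit_primitive[OF limit] in blast)+
qed

end

section \<open>Functions in the cosine space are Sobolev functions\<close>

locale cos_series_fun = cos_series +
  fixes f :: "real \<Rightarrow> real"
  assumes sums_f: "\<And>x. x \<in> {0..1} \<Longrightarrow> (\<lambda>k. c k * cos_basis k x) sums f x"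
begin

lemma deriv_series_0_eq: "x \<in> {0..1} \<Longrightarrow> deriv_series 0 x = f x"
  using sums_deriv_series[of 0 x] sums_f[of x] order_pos
  by (simp add: cos_basis_deriv_0 sums_unique2)

lemma cos_coeff_eq: "cos_coeff f k = c k"
  unfolding cos_coeff_def
  using summable_abs_mult_power[of 0] order_pos sums_f
  by (intro set_integral_cos_basis_of_sums) auto

lemma set_integral_eq_coeff_0: "(LINT x:{0..1}|lborel. f x) = c 0"
  using cos_coeff_eq[of 0] by (simp add: cos_coeff_def cos_basis_def)

lemma sob_derivs_exists: "\<exists>D. sob_derivs a f D"
proof -
  obtain h where h: "h \<in> borel_measurable lborel" "\<And>x. x \<notin> {0..1} \<Longrightarrow> h x = 0"
    "integrable lborel (\<lambda>x. (h x)\<^sup>2)"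
    "\<And>x. x \<in> {0..1} \<Longrightarrow> (LINT t:{0..x}|lborel. h t) = deriv_series (a - 1) x - deriv_series (a - 1) 0"
    using top_deriv_exists by metis
  define D where "D \<tau> = (if \<tau> < a then deriv_series \<tau> else h)" for \<tau>
  have "(\<lambda>x. indicator {0..1} x *\<^sub>R (D a x)\<^sup>2) = (\<lambda>x. (h x)\<^sup>2)"
    using h(2) by (auto simp: fun_eq_iff D_def indicator_def)
  then have "sob_derivs a f D"
    using order_pos h deriv_series_0_eq has_real_derivative_deriv_series
    by (auto simp: sob_derivs_def set_integrable_def D_def)
  then show ?thesis by blast
qed

lemma sob_deriv_eq_deriv_series:
  assumes D: "sob_derivs a f D"
  shows "\<tau> < a \<Longrightarrow> x \<in> {0..1} \<Longrightarrow> D \<tau> x = deriv_series \<tau> x"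
proof (induction \<tau> arbitrary: x)
  case 0
  then show ?case using D deriv_series_0_eq by (simp add: sob_derivs_def)
next
  case (Suc \<tau>)
  have "(D \<tau> has_real_derivative D (Suc \<tau>) x) (at x within {0..1})"
    using D Suc.prems by (simp add: sob_derivs_def)
  then have "(deriv_series \<tau> has_real_derivative D (Suc \<tau>) x) (at x within {0..1})"
    by (rule has_field_derivative_transform_within[of _ _ _ _ 1]) (use Suc in auto)
  moreover have "(deriv_series \<tau> has_real_derivative deriv_series (Suc \<tau>) x) (at x within {0..1})"
    using Suc.prems by (intro has_real_derivative_deriv_series)
  ultimately show ?case
    using vector_derivative_unique_within_closed_interval[of 0 1 x "deriv_series \<tau>"] Suc.prems
    by (simp add: has_real_derivative_iff_has_vector_derivative)
qed

text \<open>The difference of the two has vanishing primitive on \<open>[0,1]\<close>, hence vanishes a.e.\<close>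

lemma top_sob_deriv_AE_eq:
  assumes D: "sob_derivs a f D"
    and h: "h \<in> borel_measurable lborel" "\<And>x. x \<notin> {0..1} \<Longrightarrow> h x = 0" "integrable lborel (\<lambda>x. (h x)\<^sup>2)"
      "\<And>x. x \<in> {0..1} \<Longrightarrow> (LINT t:{0..x}|lborel. h t) = deriv_series (a - 1) x - deriv_series (a - 1) 0"
  shows "AE x in lborel. indicator {0..1} x * D a x = h x"
proof -
  have [measurable]: "D a \<in> borel_measurable lborel" "h \<in> borel_measurable lborel"
    using D h(1) by (auto simp: sob_derivs_def)
  define u where "u x = indicator {0..1} x * D a x - h x" for x
  have "integrable lborel (\<lambda>x. indicator {0..1} x * D a x)"
    using D integrable_and_integral_abs_le_sqrt_integral_square[of "\<lambda>x. indicator {0..1} x * D a x"]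
    by (simp add: sob_derivs_def set_integrable_def indicator_mult_square)
  moreover have "integrable lborel h"
    using integrable_and_integral_abs_le_sqrt_integral_square[OF h(1-3)] by blast
  ultimately have integrable: "integrable lborel u"
    by (simp add: u_def[abs_def])
  have Icc_integrable: "integrable lborel (\<lambda>t. indicator {0..y} t * q t)"
    if "integrable lborel q" for y and q :: "real \<Rightarrow> real"
    using integrable_real_mult_indicator[OF _ that, of "{0..y}"] by (simp add: mult.commute)
  have "(LINT t:{0..x}|lborel. u t) = 0" if x: "x \<in> {0..1}" for x
  proof -
    have "(\<lambda>t. indicator {0..x} t * (indicator {0..1} t * D a t)) = (\<lambda>t. indicator {0..x} t * D a t)"
      using x by (auto simp: fun_eq_iff split: split_indicator)
    then have "integrable lborel (\<lambda>t. indicator {0..x} t * D a t)"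
      using Icc_integrable[OF \<open>integrable lborel (\<lambda>x. indicator {0..1} x * D a x)\<close>, of x] by simp
    moreover have "(\<lambda>t. indicator {0..x} t * u t)
        = (\<lambda>t. indicator {0..x} t * D a t - indicator {0..x} t * h t)"
      using x by (auto simp: u_def fun_eq_iff split: split_indicator)
    ultimately have
      "(LINT t:{0..x}|lborel. u t) = (LINT t:{0..x}|lborel. D a t) - (LINT t:{0..x}|lborel. h t)"
      using Icc_integrable[OF \<open>integrable lborel h\<close>, of x] by (simp add: set_lebesgue_integral_def)
    also have "\<dots> = (D (a - 1) x - D (a - 1) 0) - (deriv_series (a - 1) x - deriv_series (a - 1) 0)"
      using D h(4)[OF x] x unfolding sob_derivs_def by (smt (verit))
    also have "\<dots> = 0"
      using sob_deriv_eq_deriv_series[OF D, of "a - 1"] x order_pos by simp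
    finally show ?thesis .
  qed
  then have "AE x in lborel. u x = 0"
    by (intro AE_eq_0_of_set_integral_Icc_01_eq_0[OF integrable]) (auto simp: u_def h(2))
  then show ?thesis by (simp add: u_def)
qed

lemma set_integral_square_top_sob_deriv_le:
  assumes D: "sob_derivs a f D"
  shows "(LINT x:{0..1}|lborel. (D a x)\<^sup>2) \<le> pi ^ (2 * a) * energy"
proof -
  obtain h where h: "h \<in> borel_measurable lborel" "\<And>x. x \<notin> {0..1} \<Longrightarrow> h x = 0"
    "integrable lborel (\<lambda>x. (h x)\<^sup>2)" "(\<integral>x. (h x)\<^sup>2 \<partial>lborel) \<le> pi ^ (2 * a) * energy"
    "\<And>x. x \<in> {0..1} \<Longrightarrow> (LINT t:{0..x}|lborel. h t) = deriv_series (a - 1) x - deriv_series (a - 1) 0"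
    using top_deriv_exists by metis
  have [measurable]: "D a \<in> borel_measurable lborel"
    using D by (simp add: sob_derivs_def)
  have "AE x in lborel. indicator {0..1} x * D a x = h x"
    by (rule top_sob_deriv_AE_eq[OF D h(1-3,5)])
  then have "AE x in lborel. indicator {0..1} x * (D a x)\<^sup>2 = (h x)\<^sup>2"
    by eventually_elim (metis indicator_mult_square)
  then have "(LINT x:{0..1}|lborel. (D a x)\<^sup>2) = (\<integral>x. (h x)\<^sup>2 \<partial>lborel)"
    unfolding set_lebesgue_integral_def using h(1) by (intro integral_cong_AE) auto
  with h(4) show ?thesis by simp
qed

lemma square_set_integral_sob_deriv_le:
  assumes D: "sob_derivs a f D" and "1 \<le> \<tau>" "\<tau> < a"
  shows "(LINT x:{0..1}|lborel. D \<tau> x)\<^sup>2 \<le> pi ^ (2 * \<tau>) * energy"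
proof -
  define u where "u x = indicator {0..1} x * deriv_series \<tau> x" for x
  have [measurable]: "u \<in> borel_measurable lborel"
    using borel_measurable_continuous_onI[OF continuous_on_deriv_series[of \<tau> UNIV]] assms(3)
    unfolding u_def[abs_def] by measurable
  have square: "integrable lborel (\<lambda>x. (u x)\<^sup>2) \<and> (\<integral>x. (u x)\<^sup>2 \<partial>lborel) \<le> pi ^ (2 * \<tau>) * energy"
    using set_integral_square_deriv_series_le[OF assms(2,3)] assms(3)
      borel_integrable_atLeastAtMost'[of 0 1 "\<lambda>x. (deriv_series \<tau> x)\<^sup>2"]
    by (simp add: u_def set_lebesgue_integral_def set_integrable_def indicator_mult_square
        continuous_intros continuous_on_deriv_series)
  have "(LINT x:{0..1}|lborel. D \<tau> x) = (\<integral>x. u x \<partial>lborel)"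
    unfolding set_lebesgue_integral_def u_def
    using sob_deriv_eq_deriv_series[OF D assms(3)]
    by (intro Bochner_Integration.integral_cong) (auto split: split_indicator)
  also have "\<bar>\<dots>\<bar> \<le> (\<integral>x. \<bar>u x\<bar> \<partial>lborel)"
    by (rule integral_abs_bound)
  also have "\<dots> \<le> sqrt (pi ^ (2 * \<tau>) * energy)"
    using integrable_and_integral_abs_le_sqrt_integral_square[of u] square
    by (auto simp: u_def intro: order_trans)
  finally have "\<bar>LINT x:{0..1}|lborel. D \<tau> x\<bar>\<^sup>2 \<le> (sqrt (pi ^ (2 * \<tau>) * energy))\<^sup>2"
    by (intro power_mono) auto
  then show ?thesis using energy_nonneg by simp
qed

lemma sob_norm_square_le:
  assumes "\<gamma> > 0" and D: "sob_derivs a f D"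
  shows "(LINT x:{0..1}|lborel. f x)\<^sup>2 + (1 / \<gamma>) * (\<Sum>\<tau>=1..a - 1. (LINT x:{0..1}|lborel. D \<tau> x)\<^sup>2)
      + (1 / \<gamma>) * (LINT x:{0..1}|lborel. (D a x)\<^sup>2)
    \<le> (\<Sum>i<Suc a. (pi\<^sup>2) ^ i) * ((c 0)\<^sup>2 + energy / \<gamma>)"
proof -
  define S where "S = (\<Sum>\<tau>=1..a. (pi\<^sup>2) ^ \<tau>)"
  have split_0: "{..<Suc a} = insert 0 {1..a}" by auto
  have split_top: "{1..a} = insert a {1..a - 1}" using order_pos by auto
  have S_top: "S = (\<Sum>\<tau>=1..a - 1. (pi\<^sup>2) ^ \<tau>) + (pi\<^sup>2) ^ a"
    unfolding S_def split_top using order_pos by (subst sum.insert) auto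
  have "(\<Sum>\<tau>=1..a - 1. (LINT x:{0..1}|lborel. D \<tau> x)\<^sup>2) + (LINT x:{0..1}|lborel. (D a x)\<^sup>2)
      \<le> (\<Sum>\<tau>=1..a - 1. (pi\<^sup>2) ^ \<tau> * energy) + (pi\<^sup>2) ^ a * energy"
    using square_set_integral_sob_deriv_le[OF D] set_integral_square_top_sob_deriv_le[OF D] order_pos
    by (intro add_mono sum_mono) (auto simp: power_mult)
  also have "\<dots> = S * energy"
    by (simp add: S_top sum_distrib_right distrib_right)
  finally have derivs: "(\<Sum>\<tau>=1..a - 1. (LINT x:{0..1}|lborel. D \<tau> x)\<^sup>2) + (LINT x:{0..1}|lborel. (D a x)\<^sup>2)
      \<le> S * energy" .
  have "S \<ge> 0" by (simp add: S_def sum_nonneg)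
  have "(LINT x:{0..1}|lborel. f x)\<^sup>2 + (1 / \<gamma>) * (\<Sum>\<tau>=1..a - 1. (LINT x:{0..1}|lborel. D \<tau> x)\<^sup>2)
      + (1 / \<gamma>) * (LINT x:{0..1}|lborel. (D a x)\<^sup>2) \<le> (c 0)\<^sup>2 + S * (energy / \<gamma>)"
    using mult_left_mono[OF derivs, of "1 / \<gamma>"] \<open>\<gamma> > 0\<close>
    by (simp add: set_integral_eq_coeff_0 distrib_left)
  also have "\<dots> \<le> (1 + S) * ((c 0)\<^sup>2 + energy / \<gamma>)"
    using \<open>S \<ge> 0\<close> energy_nonneg \<open>\<gamma> > 0\<close> by (simp add: algebra_simps add_divide_distrib)
  also have "1 + S = (\<Sum>i<Suc a. (pi\<^sup>2) ^ i)"
    by (simp add: S_def split_0)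
  finally show ?thesis .
qed

end

section \<open>The embedding and the identity function\<close>

lemma r_weight_pos: "k \<ge> 1 \<Longrightarrow> r_weight b \<gamma> k = \<gamma> / real k powr (2 * b)"
  by (simp add: r_weight_def powr_minus divide_inverse)

lemma r_weight_of_nat: "k \<ge> 1 \<Longrightarrow> r_weight (real n) \<gamma> k = \<gamma> / real k ^ (2 * n)"
  by (simp add: r_weight_pos powr_realpow[symmetric])

lemma H_cos_imp_cos_series_fun:
  assumes f: "f \<in> H_cos (real a) \<gamma>" and "a \<ge> 1" "\<gamma> > 0"
  obtains c where "cos_series_fun a c f"
    "cos_norm (real a) \<gamma> f = sqrt ((c 0)\<^sup>2 + cos_series.energy a c / \<gamma>)"
proof -
  obtain c where summable_weighted: "summable (\<lambda>k. (c k)\<^sup>2 / r_weight (real a) \<gamma> k)"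
    and sums_f: "\<forall>x\<in>{0..1}. (\<lambda>k. c k * cos_basis k x) sums f x"
    using f unfolding H_cos_def by blast
  have weighted: "(c k)\<^sup>2 / r_weight (real a) \<gamma> k
      = (if k = 0 then (c 0)\<^sup>2 else 0) + (c k)\<^sup>2 * real k ^ (2 * a) / \<gamma>" for k
  proof (cases "k = 0")
    case False
    then show ?thesis using \<open>\<gamma> > 0\<close> by (simp add: r_weight_of_nat)
  qed (use \<open>a \<ge> 1\<close> in \<open>simp add: r_weight_def\<close>)
  have single: "(\<lambda>k. if k = 0 then (c 0)\<^sup>2 else 0) sums (c 0)\<^sup>2"
    using sums_single[of 0 "\<lambda>_. (c 0)\<^sup>2"] by simp
  have "(\<lambda>k. (c k)\<^sup>2 * real k ^ (2 * a) / \<gamma>) sums ((\<Sum>k. (c k)\<^sup>2 / r_weight (real a) \<gamma> k) - (c 0)\<^sup>2)"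
    using sums_diff[OF summable_sums[OF summable_weighted] single] by (simp add: weighted)
  then have "(\<lambda>k. (c k)\<^sup>2 * real k ^ (2 * a)) sums (\<gamma> * ((\<Sum>k. (c k)\<^sup>2 / r_weight (real a) \<gamma> k) - (c 0)\<^sup>2))"
    using sums_mult[of _ _ \<gamma>] \<open>\<gamma> > 0\<close> by fastforce
  then interpret cos_series_fun a c f
    using \<open>a \<ge> 1\<close> sums_f by unfold_locales (auto simp: sums_iff)
  have "(\<Sum>k. (c k)\<^sup>2 / r_weight (real a) \<gamma> k) = (c 0)\<^sup>2 + energy / \<gamma>"
    using sums_add[OF single sums_divide[OF summable_sums[OF summable_energy], of \<gamma>]]
    by (simp add: weighted[symmetric] sums_iff energy_def)
  then show ?thesis
    by (intro that[of c] cos_series_fun_axioms) (simp add: cos_norm_def cos_coeff_eq)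
qed

lemma sum_pi_square_powers: "(\<Sum>i<Suc n. (pi\<^sup>2) ^ i) = (pi ^ (2 * (n + 1)) - 1) / (pi\<^sup>2 - 1)"
proof -
  have "1 < pi\<^sup>2"
    by (rule one_less_power) (use pi_gt3 in auto)
  then have "pi\<^sup>2 \<noteq> 1" by simp
  then show ?thesis
    unfolding geometric_sum[OF \<open>pi\<^sup>2 \<noteq> 1\<close>] by (simp only: power_mult Suc_eq_plus1)
qed

lemma H_cos_subset_H_sob:
  assumes "a \<ge> 1" "\<gamma> > 0"
  shows "H_cos (real a) \<gamma> \<subseteq> H_sob a"
proof
  fix f assume "f \<in> H_cos (real a) \<gamma>"
  then obtain c where "cos_series_fun a c f"
    using H_cos_imp_cos_series_fun assms by blast
  then show "f \<in> H_sob a"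
    unfolding H_sob_def using cos_series_fun.sob_derivs_exists by blast
qed

lemma sob_norm_le_cos_norm:
  assumes f: "f \<in> H_cos (real a) \<gamma>" and "a \<ge> 1" "\<gamma> > 0"
  shows "sob_norm a \<gamma> f \<le> sqrt ((pi ^ (2 * (a + 1)) - 1) / (pi\<^sup>2 - 1)) * cos_norm (real a) \<gamma> f"
proof -
  obtain c where "cos_series_fun a c f"
    and norm: "cos_norm (real a) \<gamma> f = sqrt ((c 0)\<^sup>2 + cos_series.energy a c / \<gamma>)"
    using H_cos_imp_cos_series_fun[OF assms] by blast
  then interpret cos_series_fun a c f by simp
  define D where "D = (SOME D. sob_derivs a f D)"
  define X where "X = (LINT x:{0..1}|lborel. f x)\<^sup>2
      + (1 / \<gamma>) * (\<Sum>\<tau>=1..a - 1. (LINT x:{0..1}|lborel. D \<tau> x)\<^sup>2)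
      + (1 / \<gamma>) * (LINT x:{0..1}|lborel. (D a x)\<^sup>2)"
  have "sob_derivs a f D"
    unfolding D_def using sob_derivs_exists by (rule someI_ex)
  then have "X \<le> (\<Sum>i<Suc a. (pi\<^sup>2) ^ i) * ((c 0)\<^sup>2 + energy / \<gamma>)"
    unfolding X_def by (rule sob_norm_square_le[OF \<open>\<gamma> > 0\<close>])
  then have "sqrt X \<le> sqrt ((\<Sum>i<Suc a. (pi\<^sup>2) ^ i) * ((c 0)\<^sup>2 + energy / \<gamma>))"
    by (rule real_sqrt_le_mono)
  moreover have "sob_norm a \<gamma> f = sqrt X"
    unfolding sob_norm_def Let_def X_def D_def ..
  ultimately show ?thesis
    unfolding norm real_sqrt_mult sum_pi_square_powers by simp
qed

lemma identity_in_H_sob: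
  assumes "\<alpha> \<ge> 2"
  shows "(\<lambda>x. x) \<in> H_sob \<alpha>"
proof -
  define D :: "nat \<Rightarrow> real \<Rightarrow> real" where
    "D \<tau> = (if \<tau> = 0 then (\<lambda>x. x) else if \<tau> = 1 then (\<lambda>_. 1) else (\<lambda>_. 0))" for \<tau>
  have "(D \<tau> has_real_derivative D (Suc \<tau>) x) (at x within {0..1})" for \<tau> x
    by (cases "\<tau> = 0") (auto simp: D_def)
  moreover have "D \<alpha> = (\<lambda>_. 0)" "D (\<alpha> - 1) x = D (\<alpha> - 1) 0" for x
    using assms by (auto simp: D_def)
  ultimately have "sob_derivs \<alpha> (\<lambda>x. x) D"
    by (simp add: sob_derivs_def set_integrable_def D_def)
  then show ?thesis unfolding H_sob_def by blast
qed

lemma set_integral_identity_cos_basis_odd: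
  assumes "odd m"
  shows "(LINT x:{0..1}|lborel. x * cos_basis m x) = - (2 * sqrt 2) / (pi * real m)\<^sup>2"
proof -
  have "m \<noteq> 0" using odd_pos[OF assms] by simp
  define G where "G x = x * sin (pi * real m * x) / (pi * real m) + cos (pi * real m * x) / (pi * real m)\<^sup>2"
    for x
  have "(LINT x:{0..1}|lborel. x * cos (pi * real m * x)) = G 1 - G 0"
    unfolding G_def[abs_def] using \<open>m \<noteq> 0\<close>
    by (intro set_integral_FTC_Icc)
       (auto intro!: derivative_eq_intros continuous_intros simp: field_simps power2_eq_square)
  also have "\<dots> = - 2 / (pi * real m)\<^sup>2"
    using assms \<open>m \<noteq> 0\<close> by (simp add: G_def)
  finally have "(LINT x:{0..1}|lborel. x * cos (pi * real m * x)) = - 2 / (pi * real m)\<^sup>2" .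
  moreover have "(LINT x:{0..1}|lborel. x * cos_basis m x)
      = (LINT x:{0..1}|lborel. sqrt 2 * (x * cos (pi * real m * x)))"
    using \<open>m \<noteq> 0\<close> by (simp add: cos_basis_def mult_ac)
  ultimately show ?thesis by simp
qed

lemma not_summable_inverse_odd: "\<not> summable (\<lambda>n. 1 / real (2 * n + 1))"
proof
  assume "summable (\<lambda>n. 1 / real (2 * n + 1))"
  then have "summable (\<lambda>n. inverse (real (Suc n)))"
    by (rule summable_comparison_test[OF _ summable_mult[of _ 2], rotated]) (auto simp: field_simps)
  then show False
    using not_summable_harmonic[where 'a = real] summable_Suc_iff by blast
qed

lemma summable_cube_of_summable_r_weight:
  assumes "summable (\<lambda>k. (c k)\<^sup>2 / r_weight b \<gamma> k)" "b \<ge> 3/2" "\<gamma> > 0"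
  shows "summable (\<lambda>k. (c k)\<^sup>2 * real k ^ 3)"
proof (rule summable_comparison_test_ev[OF _ summable_mult[OF assms(1), of \<gamma>]])
  have cube_le: "norm ((c k)\<^sup>2 * real k ^ 3) \<le> \<gamma> * ((c k)\<^sup>2 / r_weight b \<gamma> k)" if "k \<ge> 1" for k
  proof -
    have "real k ^ 3 = real k powr 3" using that by (simp add: powr_realpow)
    also have "\<dots> \<le> real k powr (2 * b)" using assms that by (intro powr_mono) auto
    finally show ?thesis
      using that \<open>\<gamma> > 0\<close> by (simp add: r_weight_pos mult_left_mono)
  qed
  show "\<forall>\<^sub>F k in sequentially. norm ((c k)\<^sup>2 * real k ^ 3) \<le> \<gamma> * ((c k)\<^sup>2 / r_weight b \<gamma> k)"
    using eventually_ge_at_top[of "1::nat"] by eventually_elim (rule cube_le)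
qed

lemma identity_notin_H_cos:
  assumes "b \<ge> 3/2" "\<gamma> > 0"
  shows "(\<lambda>x. x) \<notin> H_cos b \<gamma>"
proof
  assume "(\<lambda>x. x) \<in> H_cos b \<gamma>"
  then obtain c where summable_weighted: "summable (\<lambda>k. (c k)\<^sup>2 / r_weight b \<gamma> k)"
    and sums_identity: "\<forall>x\<in>{0..1}. (\<lambda>k. c k * cos_basis k x) sums x"
    unfolding H_cos_def by blast
  have summable_cube: "summable (\<lambda>k. (c k)\<^sup>2 * real k ^ 3)"
    using summable_cube_of_summable_r_weight[OF summable_weighted] assms by blast
  have "norm ((c k)\<^sup>2 * real k ^ (2 * 1)) \<le> (c k)\<^sup>2 * real k ^ 3" for k
    by (cases "k = 0") (auto intro!: mult_left_mono power_increasing)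
  then have "summable (\<lambda>k. (c k)\<^sup>2 * real k ^ (2 * 1))"
    by (intro summable_comparison_test[OF _ summable_cube]) auto
  then interpret cos_series 1 c
    by unfold_locales simp
  have coeff: "c m = - (2 * sqrt 2) / (pi * real m)\<^sup>2" if "odd m" for m
    using set_integral_cos_basis_of_sums[OF _ sums_identity, of m] summable_abs_mult_power[of 0]
      set_integral_identity_cos_basis_odd[OF that]
    by simp
  have "(c (2 * n + 1))\<^sup>2 * real (2 * n + 1) ^ 3 = (8 / pi ^ 4) * (1 / real (2 * n + 1))" for n
  proof -
    define N where "N = real (2 * n + 1)"
    have c_odd: "c (2 * n + 1) = - (2 * sqrt 2) / (pi * N)\<^sup>2"
      unfolding N_def by (rule coeff) simp
    have "N > 0" by (simp add: N_def)
    then show ?thesis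
      unfolding N_def[symmetric] c_odd
      by (simp add: power_divide power_mult_distrib field_simps eval_nat_numeral)
  qed
  moreover have "summable (\<lambda>n. (c (2 * n + 1))\<^sup>2 * real (2 * n + 1) ^ 3)"
    using summable_reindex[OF summable_cube, of "\<lambda>n. 2 * n + 1"] by (simp add: inj_on_def comp_def)
  ultimately have "summable (\<lambda>n. (8 / pi ^ 4) * (1 / real (2 * n + 1)))"
    by simp
  then have "summable (\<lambda>n. (pi ^ 4 / 8) * ((8 / pi ^ 4) * (1 / real (2 * n + 1))))"
    by (rule summable_mult)
  then show False
    using not_summable_inverse_odd by simp
qed

theorem mainTheorem3:
  fixes \<alpha> :: nat and \<gamma> :: real
  assumes "\<alpha> \<ge> 2" and "\<gamma> > 0"
  shows "H_cos (real \<alpha>) \<gamma> \<subseteq> H_sob \<alpha>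
     \<and> (\<forall>f\<in>H_cos (real \<alpha>) \<gamma>.
           sob_norm \<alpha> \<gamma> f \<le> sqrt ((pi ^ (2 * (\<alpha> + 1)) - 1) / (pi\<^sup>2 - 1)) * cos_norm (real \<alpha>) \<gamma> f)
     \<and> (\<lambda>x. x) \<in> H_sob \<alpha>
     \<and> (\<lambda>x. x) \<notin> H_cos (real \<alpha>) \<gamma>
     \<and> (\<forall>a::real. a \<ge> 3/2 \<longrightarrow> (\<lambda>x. x) \<notin> H_cos a \<gamma>)"
proof (intro conjI ballI allI impI)
  show "H_cos (real \<alpha>) \<gamma> \<subseteq> H_sob \<alpha>"
    using assms by (intro H_cos_subset_H_sob) auto
  show "sob_norm \<alpha> \<gamma> f \<le> sqrt ((pi ^ (2 * (\<alpha> + 1)) - 1) / (pi\<^sup>2 - 1)) * cos_norm (real \<alpha>) \<gamma> f"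
    if "f \<in> H_cos (real \<alpha>) \<gamma>" for f
    using that assms by (intro sob_norm_le_cos_norm) auto
  show "(\<lambda>x. x) \<in> H_sob \<alpha>"
    using assms(1) by (rule identity_in_H_sob)
  show "(\<lambda>x. x) \<notin> H_cos (real \<alpha>) \<gamma>"
    using assms by (intro identity_notin_H_cos) auto
  show "(\<lambda>x. x) \<notin> H_cos b \<gamma>" if "b \<ge> 3/2" for b
    using that assms(2) by (rule identity_notin_H_cos)
qed

end
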